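(* For all types $\tau_1,\tau_2,\tau_p$ with $\tau_p=\tau_1+\tau_2$, every heap $H$, register file $R$ and value $v$: $\mathrm{SATv}(H,R,v,\tau_p)$ holds if and only if both $\mathrm{SATv}(H,R,v,\tau_1)$ and $\mathrm{SATv}(H,R,v,\tau_2)$ hold.
   Context: Refinement formulas are first-order formulas over integer program variables, integer literals, a value variable $\nu$, atomic predicates of a fixed theory and context-prefix predicates; $\models\psi$ means $\psi$ is valid. Types $\tau ::= \{\nu:\mathtt{int}\mid\varphi\}\mid\tau\ \mathtt{ref}^r$, $r\in[0,1]$ rational. Type addition is the least commutative partial operation with $\{\nu:\mathtt{int}\mid\varphi_1\}+\{\nu:\mathtt{int}\mid\varphi_2\}=\{\nu:\mathtt{int}\mid\varphi_1\wedge\varphi_2\}$ and $\tau_1\ \mathtt{ref}^{r_1}+\tau_2\ \mathtt{ref}^{r_2}=(\tau_1+\tau_2)\ \mathtt{ref}^{r_1+r_2}$. Values: integers or addresses; heap $H$: finite partial map addresses $\to$ values; register file $R$: finite partial map variables $\to$ values. $[R]\varphi$: $[\emptyset]\varphi=\varphi$, $[R\{x\mapsto n\}]\varphi=[R][n/x]\varphi$ ($n$ integer), $[R\{x\mapsto a\}]\varphi=[R]\varphi$ ($a$ address). $\mathrm{SATv}(H,R,v,\tau)$: for $\tau=\{\nu:\mathtt{int}\mid\varphi\}$, $v\in\mathbb Z$ and $\models[R][v/\nu]\varphi$; for $\tau=\tau'\ \mathtt{ref}^r$, $v$ is an address $a\in dom(H)$ and $\mathrm{SATv}(H,R,H(a),\tau')$.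 *)

theory Defs
  imports Complex_Main
begin

datatype 'v trm = TVar 'v | TNu | TLit int

datatype ('v,'p,'c) fml =
    FTrue | FFalse
  | Atom 'p "'v trm list"
  | CtxPre 'c
  | Neg "('v,'p,'c) fml"
  | Conj "('v,'p,'c) fml" "('v,'p,'c) fml"
  | Disj "('v,'p,'c) fml" "('v,'p,'c) fml"
  | Impl "('v,'p,'c) fml" "('v,'p,'c) fml"
  | Forall 'v "('v,'p,'c) fml"
  | Exists 'v "('v,'p,'c) fml"

fun trm_val :: "('v \<Rightarrow> int) \<Rightarrow> int \<Rightarrow> 'v trm \<Rightarrow> int" where
  "trm_val \<sigma> n (TVar x) = \<sigma> x"
| "trm_val \<sigma> n TNu = n"
| "trm_val \<sigma> n (TLit i) = i"

fun holds :: "('p \<Rightarrow> int list \<Rightarrow> bool) \<Rightarrow> ('c \<Rightarrow> 'k \<Rightarrow> bool) \<Rightarrow> 'k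
              \<Rightarrow> ('v \<Rightarrow> int) \<Rightarrow> int \<Rightarrow> ('v,'p,'c) fml \<Rightarrow> bool" where
  "holds IP IC k \<sigma> n FTrue = True"
| "holds IP IC k \<sigma> n FFalse = False"
| "holds IP IC k \<sigma> n (Atom p ts) = IP p (map (trm_val \<sigma> n) ts)"
| "holds IP IC k \<sigma> n (CtxPre c) = IC c k"
| "holds IP IC k \<sigma> n (Neg f) = (\<not> holds IP IC k \<sigma> n f)"
| "holds IP IC k \<sigma> n (Conj f g) = (holds IP IC k \<sigma> n f \<and> holds IP IC k \<sigma> n g)"
| "holds IP IC k \<sigma> n (Disj f g) = (holds IP IC k \<sigma> n f \<or> holds IP IC k \<sigma> n g)"
| "holds IP IC k \<sigma> n (Impl f g) = (holds IP IC k \<sigma> n f \<longrightarrow> holds IP IC k \<sigma> n g)"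
| "holds IP IC k \<sigma> n (Forall x f) = (\<forall>i. holds IP IC k (\<sigma>(x := i)) n f)"
| "holds IP IC k \<sigma> n (Exists x f) = (\<exists>i. holds IP IC k (\<sigma>(x := i)) n f)"

definition valid :: "('p \<Rightarrow> int list \<Rightarrow> bool) \<Rightarrow> ('c \<Rightarrow> 'k \<Rightarrow> bool) \<Rightarrow> ('v,'p,'c) fml \<Rightarrow> bool" where
  "valid IP IC f \<longleftrightarrow> (\<forall>k \<sigma> n. holds IP IC k \<sigma> n f)"

text \<open>Substitution of integers for variables / for nu (no capture possible: literals).
 subst_vars s f replaces every free occurrence of x by the literal i whenever s x = Some i.\<close>
fun trm_subst_vars :: "('v \<Rightarrow> int option) \<Rightarrow> 'v trm \<Rightarrow> 'v trm" where
  "trm_subst_vars s (TVar x) = (case s x of Some i \<Rightarrow> TLit i | None \<Rightarrow> TVar x)"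
| "trm_subst_vars s t = t"

fun subst_vars :: "('v \<Rightarrow> int option) \<Rightarrow> ('v,'p,'c) fml \<Rightarrow> ('v,'p,'c) fml" where
  "subst_vars s FTrue = FTrue"
| "subst_vars s FFalse = FFalse"
| "subst_vars s (Atom p ts) = Atom p (map (trm_subst_vars s) ts)"
| "subst_vars s (CtxPre c) = CtxPre c"
| "subst_vars s (Neg f) = Neg (subst_vars s f)"
| "subst_vars s (Conj f g) = Conj (subst_vars s f) (subst_vars s g)"
| "subst_vars s (Disj f g) = Disj (subst_vars s f) (subst_vars s g)"
| "subst_vars s (Impl f g) = Impl (subst_vars s f) (subst_vars s g)"
| "subst_vars s (Forall x f) = Forall x (subst_vars (s(x := None)) f)"
| "subst_vars s (Exists x f) = Exists x (subst_vars (s(x := None)) f)"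

fun trm_subst_nu :: "int \<Rightarrow> 'v trm \<Rightarrow> 'v trm" where
  "trm_subst_nu n TNu = TLit n"
| "trm_subst_nu n t = t"

fun subst_nu :: "int \<Rightarrow> ('v,'p,'c) fml \<Rightarrow> ('v,'p,'c) fml" where
  "subst_nu n FTrue = FTrue"
| "subst_nu n FFalse = FFalse"
| "subst_nu n (Atom p ts) = Atom p (map (trm_subst_nu n) ts)"
| "subst_nu n (CtxPre c) = CtxPre c"
| "subst_nu n (Neg f) = Neg (subst_nu n f)"
| "subst_nu n (Conj f g) = Conj (subst_nu n f) (subst_nu n g)"
| "subst_nu n (Disj f g) = Disj (subst_nu n f) (subst_nu n g)"
| "subst_nu n (Impl f g) = Impl (subst_nu n f) (subst_nu n g)"
| "subst_nu n (Forall x f) = Forall x (subst_nu n f)"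
| "subst_nu n (Exists x f) = Exists x (subst_nu n f)"

datatype 'a val = VInt int | VAddr 'a

type_synonym 'a heap = "'a \<rightharpoonup> 'a val"
type_synonym ('v,'a) regs = "'v \<rightharpoonup> 'a val"

text \<open>[R]phi: every register holding an integer n substitutes n for its variable;
 registers holding addresses are ignored. (Simultaneous form of the iterated definition;
 the substitutions are of literals for distinct variables, so order is irrelevant.)\<close>
definition int_part :: "('v,'a) regs \<Rightarrow> 'v \<Rightarrow> int option" where
  "int_part R x = (case R x of Some (VInt n) \<Rightarrow> Some n | _ \<Rightarrow> None)"

definition apply_regs :: "('v,'a) regs \<Rightarrow> ('v,'p,'c) fml \<Rightarrow> ('v,'p,'c) fml" where
  "apply_regs R f = subst_vars (int_part R) f"

datatype ('v,'p,'c) ty = TInt "('v,'p,'c) fml" | TRef "('v,'p,'c) ty" rat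

fun wf_ty :: "('v,'p,'c) ty \<Rightarrow> bool" where
  "wf_ty (TInt \<phi>) = True"
| "wf_ty (TRef t r) = (0 \<le> r \<and> r \<le> 1 \<and> wf_ty t)"

fun ty_add :: "('v,'p,'c) ty \<Rightarrow> ('v,'p,'c) ty \<Rightarrow> ('v,'p,'c) ty option" where
  "ty_add (TInt \<phi>1) (TInt \<phi>2) = Some (TInt (Conj \<phi>1 \<phi>2))"
| "ty_add (TRef t1 r1) (TRef t2 r2) =
     (case ty_add t1 t2 of Some t \<Rightarrow> Some (TRef t (r1 + r2)) | None \<Rightarrow> None)"
| "ty_add _ _ = None"

fun SATv :: "('p \<Rightarrow> int list \<Rightarrow> bool) \<Rightarrow> ('c \<Rightarrow> 'k \<Rightarrow> bool) \<Rightarrow>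
             'a heap \<Rightarrow> ('v,'a) regs \<Rightarrow> 'a val \<Rightarrow> ('v,'p,'c) ty \<Rightarrow> bool" where
  "SATv IP IC H R v (TInt \<phi>) =
     (case v of VInt n \<Rightarrow> valid IP IC (apply_regs R (subst_nu n \<phi>)) | VAddr _ \<Rightarrow> False)"
| "SATv IP IC H R v (TRef t r) =
     (case v of VAddr a \<Rightarrow> (case H a of Some w \<Rightarrow> SATv IP IC H R w t | None \<Rightarrow> False)
              | VInt _ \<Rightarrow> False)"

end

theory Submission
  imports Defs
begin

(* Type addition conjoins the refinements at the integer leaves and otherwise follows the
   same chain of references on both sides, so by induction on the addition everything
   reduces to the leaf case. There, substitution distributes over conjunction and validity
   of a conjunction is the conjunction of the validities. *)

lemma valid_Conj: "valid IP IC (Conj f g) \<longleftrightarrow> valid IP IC f \<and> valid IP IC g"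
  unfolding valid_def by auto

lemma apply_regs_Conj: "apply_regs R (Conj f g) = Conj (apply_regs R f) (apply_regs R g)"
  unfolding apply_regs_def by simp

lemma SATv_TInt_Conj:
  "SATv IP IC H R v (TInt (Conj \<phi>1 \<phi>2)) \<longleftrightarrow>
     SATv IP IC H R v (TInt \<phi>1) \<and> SATv IP IC H R v (TInt \<phi>2)"
  by (cases v) (simp_all add: apply_regs_Conj valid_Conj)

lemma SATv_ty_add:
  assumes "ty_add \<tau>1 \<tau>2 = Some \<tau>"
  shows "SATv IP IC H R v \<tau> \<longleftrightarrow> SATv IP IC H R v \<tau>1 \<and> SATv IP IC H R v \<tau>2"
  using assms
proof (induction \<tau>1 \<tau>2 arbitrary: \<tau> v rule: ty_add.induct)
  case (1 \<phi>1 \<phi>2)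
  then have "\<tau> = TInt (Conj \<phi>1 \<phi>2)"
    by simp
  then show ?case
    by (simp only: SATv_TInt_Conj)
next
  case (2 t1 r1 t2 r2)
  then obtain t where "ty_add t1 t2 = Some t" and "\<tau> = TRef t (r1 + r2)"
    by (auto split: option.splits)
  with "2.IH" show ?case
    by (auto split: val.splits option.splits)
qed simp_all

theorem lemma16:
  fixes IP :: "'p \<Rightarrow> int list \<Rightarrow> bool" and IC :: "'c \<Rightarrow> 'k \<Rightarrow> bool"
    and \<tau>1 \<tau>2 \<tau>p :: "('v,'p,'c) ty"
    and H :: "'a heap" and R :: "('v,'a) regs" and v :: "'a val"
  assumes "wf_ty \<tau>1" and "wf_ty \<tau>2" and "wf_ty \<tau>p"
    and "ty_add \<tau>1 \<tau>2 = Some \<tau>p"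
    and "finite (dom H)" and "finite (dom R)"
  shows "SATv IP IC H R v \<tau>p \<longleftrightarrow> (SATv IP IC H R v \<tau>1 \<and> SATv IP IC H R v \<tau>2)"
  using SATv_ty_add[OF \<open>ty_add \<tau>1 \<tau>2 = Some \<tau>p\<close>] .

end
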